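(* Let $E=(C,V)$ be an approval election such that $0<|A(u)|=|A(v)|<|C|$ for all $u,v\in V$. Then $\mathrm{pair\text{-}agr}(E)=\mathrm{pcc\text{-}agr}(E)$.
   Context: An (approval) election is a pair $E=(C,V)$ with candidate set $C=\{c_1,\dots,c_m\}$ and a collection of voters $V$; each vote is a binary vector in $\{0,1\}^m$, and $A(v)$ is the set of candidates approved by $v$. $\mathrm{ham}(u,v)=\sum_j|u[j]-v[j]|$. $\mathrm{satr}(E)=\frac{1}{|V||C|}\sum_{v\in V}|A(v)|$. $\mathrm{pair\text{-}agr}(E)=1-\frac{\sum_{u\in V}\sum_{v\in V}\mathrm{ham}(u,v)}{2|V|^2|C|\,\mathrm{satr}(E)(1-\mathrm{satr}(E))}$. Pearson correlation $\mathrm{pcc}(x,y)=\frac{\sum_i(x[i]-\overline{x})(y[i]-\overline{y})}{\sqrt{\sum_i(x[i]-\overline{x})^2}\sqrt{\sum_i(y[i]-\overline{y})^2}}$ (set to $1$ if $x$ or $y$ is constant), and $\mathrm{pcc\text{-}agr}(E)=\frac{1}{|V|^2}\sum_{u\in V}\sum_{v\in V}\mathrm{pcc}(u,v)$; sums are over all ordered pairs including $u=v$. *)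

theory Defs
  imports Complex_Main
begin

text \<open>Candidates are c_0,...,c_{m-1} (indices 0..<m).
  The voter collection V is a list of votes (duplicates allowed).\<close>

definition is_vote :: "nat \<Rightarrow> (nat \<Rightarrow> real) \<Rightarrow> bool" where
  "is_vote m v \<longleftrightarrow> (\<forall>j<m. v j = 0 \<or> v j = 1)"

definition approved :: "nat \<Rightarrow> (nat \<Rightarrow> real) \<Rightarrow> nat set" where
  "approved m v = {j. j < m \<and> v j = 1}"

definition ham :: "nat \<Rightarrow> (nat \<Rightarrow> real) \<Rightarrow> (nat \<Rightarrow> real) \<Rightarrow> real" where
  "ham m u v = (\<Sum>j<m. \<bar>u j - v j\<bar>)"

definition satr :: "nat \<Rightarrow> (nat \<Rightarrow> real) list \<Rightarrow> real" where
  "satr m V = (\<Sum>v\<leftarrow>V. real (card (approved m v))) / (real (length V) * real m)"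

definition pair_agr :: "nat \<Rightarrow> (nat \<Rightarrow> real) list \<Rightarrow> real" where
  "pair_agr m V = 1 - (\<Sum>u\<leftarrow>V. \<Sum>v\<leftarrow>V. ham m u v) /
     (2 * real (length V) ^ 2 * real m * satr m V * (1 - satr m V))"

definition mean :: "nat \<Rightarrow> (nat \<Rightarrow> real) \<Rightarrow> real" where
  "mean m x = (\<Sum>i<m. x i) / real m"

definition is_constant :: "nat \<Rightarrow> (nat \<Rightarrow> real) \<Rightarrow> bool" where
  "is_constant m x \<longleftrightarrow> (\<forall>i<m. \<forall>j<m. x i = x j)"

definition pcc :: "nat \<Rightarrow> (nat \<Rightarrow> real) \<Rightarrow> (nat \<Rightarrow> real) \<Rightarrow> real" where
  "pcc m x y = (if is_constant m x \<or> is_constant m y then 1 else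
     (\<Sum>i<m. (x i - mean m x) * (y i - mean m y)) /
     (sqrt (\<Sum>i<m. (x i - mean m x)^2) * sqrt (\<Sum>i<m. (y i - mean m y)^2)))"

definition pcc_agr :: "nat \<Rightarrow> (nat \<Rightarrow> real) list \<Rightarrow> real" where
  "pcc_agr m V = (\<Sum>u\<leftarrow>V. \<Sum>v\<leftarrow>V. pcc m u v) / real (length V) ^ 2"

end

theory Submission
  imports Defs
begin

text \<open>If x and y have the same mean and the same variance s > 0, expanding
  the squared distance of the centred vectors gives
  \<open>\<Sum>(x i - y i)^2 = 2 s - 2 cov(x, y)\<close>, i.e. pcc(x, y) = 1 - \<open>\<Sum>(x i - y i)^2\<close> / (2 s).
  For 0/1 vectors the squared distance is the Hamming distance, and a vote approving k of
  the m candidates has mean q = k/m and variance s = m q (1 - q). When all votes approve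
  k candidates, q is also the approval rate satr(E), so averaging the identity over all
  ordered pairs of voters gives exactly pair-agr(E).\<close>

lemma sum_centered_square:
  "(\<Sum>i<m. (x i - mean m x)^2) = (\<Sum>i<m. (x i)^2) - real m * (mean m x)^2"
proof (cases "m = 0")
  case False
  have "(\<Sum>i<m. (x i - mean m x)^2)
      = (\<Sum>i<m. (x i)^2) + real m * (mean m x)^2 - 2 * (\<Sum>i<m. x i) * mean m x"
    by (simp add: power2_diff sum.distrib sum_subtractf
        flip: sum_distrib_right sum_distrib_left)
  also have "(\<Sum>i<m. x i) = real m * mean m x"
    using False by (simp add: mean_def)
  finally show ?thesis by (simp add: power2_eq_square)
qed simp

lemma sum_centered_square_pos:
  assumes "\<not> is_constant m x"
  shows "0 < (\<Sum>i<m. (x i - mean m x)^2)"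
proof -
  obtain i j where "i < m" "j < m" "x i \<noteq> x j"
    using assms by (auto simp: is_constant_def)
  then obtain l where l: "l < m" "x l - mean m x \<noteq> 0"
    by (metis eq_iff_diff_eq_0)
  have "0 < (x l - mean m x)^2" using l(2) by simp
  also have "\<dots> \<le> (\<Sum>i<m. (x i - mean m x)^2)"
    by (rule member_le_sum) (use l(1) in auto)
  finally show ?thesis .
qed

lemma pcc_eq_one_minus_sum_square_diff:
  assumes "\<not> is_constant m x" "\<not> is_constant m y"
    and same_mean: "mean m x = mean m y"
    and same_var: "(\<Sum>i<m. (x i - mean m x)^2) = (\<Sum>i<m. (y i - mean m y)^2)"
  shows "pcc m x y = 1 - (\<Sum>i<m. (x i - y i)^2) / (2 * (\<Sum>i<m. (x i - mean m x)^2))"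
proof -
  define \<mu> where "\<mu> = mean m x"
  define s where "s = (\<Sum>i<m. (x i - \<mu>)^2)"
  define c where "c = (\<Sum>i<m. (x i - \<mu>) * (y i - \<mu>))"
  have s_pos: "0 < s"
    using sum_centered_square_pos[OF assms(1)] by (simp add: s_def \<mu>_def)
  have "(\<Sum>i<m. (x i - y i)^2)
      = (\<Sum>i<m. (x i - \<mu>)^2 + (y i - \<mu>)^2 - 2 * ((x i - \<mu>) * (y i - \<mu>)))"
    by (rule sum.cong) (simp_all add: power2_eq_square algebra_simps)
  also have "\<dots> = s + (\<Sum>i<m. (y i - \<mu>)^2) - 2 * c"
    by (simp add: s_def c_def sum.distrib sum_subtractf sum_distrib_left)
  also have "(\<Sum>i<m. (y i - \<mu>)^2) = s"
    using same_mean same_var by (simp add: s_def \<mu>_def)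
  finally have dist: "(\<Sum>i<m. (x i - y i)^2) = 2 * s - 2 * c" by simp
  have "pcc m x y = c / s"
    using assms(1,2) same_mean same_var s_pos
    by (simp add: pcc_def c_def s_def \<mu>_def flip: power2_eq_square)
  also have "\<dots> = 1 - (2 * s - 2 * c) / (2 * s)"
    using s_pos by (simp add: field_simps)
  finally show ?thesis by (simp add: dist s_def \<mu>_def)
qed

lemma vote_value_cases: "is_vote m v \<Longrightarrow> j < m \<Longrightarrow> v j = 0 \<or> v j = 1"
  by (simp add: is_vote_def)

lemma vote_square: "is_vote m v \<Longrightarrow> j < m \<Longrightarrow> (v j)^2 = v j"
  using vote_value_cases by fastforce

lemma sum_vote_eq_card_approved:
  assumes "is_vote m v"
  shows "(\<Sum>j<m. v j) = real (card (approved m v))"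
proof -
  have "(\<Sum>j<m. v j) = (\<Sum>j<m. if v j = 1 then 1 else 0)"
    by (rule sum.cong) (use vote_value_cases[OF assms] in auto)
  also have "\<dots> = real (card ({..<m} \<inter> {j. v j = 1}))"
    by (simp add: sum.If_cases)
  also have "{..<m} \<inter> {j. v j = 1} = approved m v"
    by (auto simp: approved_def)
  finally show ?thesis .
qed

lemma mean_vote: "is_vote m v \<Longrightarrow> mean m v = real (card (approved m v)) / real m"
  by (simp add: mean_def sum_vote_eq_card_approved)

lemma sum_centered_square_vote:
  assumes "is_vote m v"
  shows "(\<Sum>i<m. (v i - mean m v)^2) = real m * mean m v * (1 - mean m v)"
proof -
  have "(\<Sum>i<m. (v i)^2) = (\<Sum>i<m. v i)"
    by (simp add: vote_square[OF assms])
  also have "\<dots> = real m * mean m v"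
    by (cases "m = 0") (simp_all add: mean_def)
  finally have sum_square: "(\<Sum>i<m. (v i)^2) = real m * mean m v" .
  show ?thesis
    unfolding sum_centered_square sum_square by (simp add: algebra_simps power2_eq_square)
qed

lemma ham_vote_eq_sum_square_diff:
  assumes "is_vote m u" "is_vote m v"
  shows "ham m u v = (\<Sum>i<m. (u i - v i)^2)"
  unfolding ham_def
  by (rule sum.cong)
    (use vote_value_cases[OF assms(1)] vote_value_cases[OF assms(2)] in fastforce)+

lemma vote_not_constant:
  assumes "is_vote m v" "0 < card (approved m v)" "card (approved m v) < m"
  shows "\<not> is_constant m v"
proof
  assume const: "is_constant m v"
  obtain a where "a \<in> approved m v"
    using assms(2) by (metis card.empty ex_in_conv less_irrefl)
  then have "a < m" "v a = 1" by (auto simp: approved_def)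
  with const have "v j = 1" if "j < m" for j
    using that unfolding is_constant_def by metis
  then have "approved m v = {..<m}"
    by (auto simp: approved_def)
  with assms(3) show False by simp
qed

lemma pcc_vote:
  assumes u: "is_vote m u" and v: "is_vote m v"
    and card_u: "card (approved m u) = k" and card_v: "card (approved m v) = k"
    and "0 < k" "k < m"
  shows "pcc m u v = 1 - ham m u v / (2 * real m * (k / m) * (1 - k / m))"
proof -
  have mean_u: "mean m u = k / m" and mean_v: "mean m v = k / m"
    using mean_vote[OF u] mean_vote[OF v] card_u card_v by simp_all
  have "pcc m u v = 1 - (\<Sum>i<m. (u i - v i)^2) / (2 * (\<Sum>i<m. (u i - mean m u)^2))"
  proof (rule pcc_eq_one_minus_sum_square_diff)
    show "\<not> is_constant m u" "\<not> is_constant m v"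
      using vote_not_constant[OF u] vote_not_constant[OF v] card_u card_v assms(5,6) by simp_all
    show "(\<Sum>i<m. (u i - mean m u)^2) = (\<Sum>i<m. (v i - mean m v)^2)"
      unfolding sum_centered_square_vote[OF u] sum_centered_square_vote[OF v]
      by (simp add: mean_u mean_v)
  qed (simp add: mean_u mean_v)
  then show ?thesis
    unfolding sum_centered_square_vote[OF u] ham_vote_eq_sum_square_diff[OF u v]
    by (simp add: mean_u mult.assoc)
qed

lemma satr_uniform:
  assumes "V \<noteq> []" "\<forall>v\<in>set V. card (approved m v) = k"
  shows "satr m V = k / m"
proof -
  have "(\<Sum>v\<leftarrow>V. real (card (approved m v))) = (\<Sum>v\<leftarrow>V. real k)"
    using assms(2) by (simp cong: map_cong)
  then show ?thesis
    using assms(1) by (simp add: satr_def sum_list_triv)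
qed

lemma pairwise_mean_one_minus_div:
  fixes f :: "'a \<Rightarrow> 'a \<Rightarrow> real"
  assumes "V \<noteq> []"
  shows "(\<Sum>u\<leftarrow>V. \<Sum>v\<leftarrow>V. 1 - f u v / c) / real (length V)^2
       = 1 - (\<Sum>u\<leftarrow>V. \<Sum>v\<leftarrow>V. f u v) / (real (length V)^2 * c)"
proof -
  have "(\<Sum>u\<leftarrow>V. \<Sum>v\<leftarrow>V. 1 - f u v / c)
      = real (length V)^2 - (\<Sum>u\<leftarrow>V. \<Sum>v\<leftarrow>V. f u v) / c"
    by (simp add: sum_list_subtractf sum_list_triv divide_inverse sum_list_mult_const
        power2_eq_square)
  then show ?thesis
    using assms by (simp add: diff_divide_distrib)
qed

theorem proposition6:
  fixes m :: nat and V :: "(nat \<Rightarrow> real) list"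
  assumes "V \<noteq> []"
    and "\<forall>v\<in>set V. is_vote m v"
    and "\<forall>u\<in>set V. \<forall>v\<in>set V.
           0 < card (approved m u) \<and> card (approved m u) = card (approved m v)
           \<and> card (approved m v) < m"
  shows "pair_agr m V = pcc_agr m V"
proof -
  define k where "k = card (approved m (hd V))"
  have "hd V \<in> set V" using assms(1) by simp
  then have card_k: "\<forall>v\<in>set V. card (approved m v) = k" and "0 < k" "k < m"
    using assms(3) unfolding k_def by metis+
  define c where "c = 2 * real m * (k / m) * (1 - k / m)"
  have "pcc_agr m V = (\<Sum>u\<leftarrow>V. \<Sum>v\<leftarrow>V. 1 - ham m u v / c) / real (length V)^2"
    unfolding pcc_agr_def c_def
    using pcc_vote assms(2) card_k \<open>0 < k\<close> \<open>k < m\<close>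
    by (intro arg_cong2[where f = "(/)"] arg_cong[where f = sum_list] map_cong) simp_all
  also have "\<dots> = pair_agr m V"
    using pairwise_mean_one_minus_div[OF assms(1)] satr_uniform[OF assms(1) card_k]
    by (simp add: pair_agr_def c_def mult.assoc)
  finally show ?thesis ..
qed

end
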